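(* Let $M\ge 0$. Given an infinite antichain $S_1,S_2,\dots$ in the poset $(\mathrm{RL},\le_{RL})$, where $S_i$ is a reading list of type $(d_i,n_i)$, at least one of the sequences $(n_i)_i$ and $(d_i)_i$ is bounded.
   Context: Fix an integer $M\ge0$. A reading list of type $(d,n)$ is a tuple $S=(S^1,\dots,S^n)$ of $d$-element subsets of $[Md]=\{1,\dots,Md\}$ (each $S^i$ viewed as an increasing word). $\mathrm{RL}$ denotes the set of all reading lists of all types. For $S=(S^1,\dots,S^n)$ of type $(d,n)$ and $T=(T^1,\dots,T^m)$ of type $(e,m)$, define $S\le_{RL}T$ iff there exist indices $1\le k_1<k_2<\cdots<k_n\le m$ and maps $f_i:S^i\to T^{k_i}$ ($i=1,\dots,n$), each strictly increasing, such that $f_i(x)=f_j(x)$ for all $i,j$ and all $x\in S^i\cap S^j$. An antichain is a sequence of pairwise incomparable elements. *)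

theory Defs
  imports Main
begin

text \<open>A reading list is represented together with its type: a pair (d, Ss) where
  Ss is the list (S^1,...,S^n) of d-element subsets of [M d] = {1..M*d}; n = length Ss.\<close>

type_synonym reading_list = "nat \<times> nat set list"

definition is_reading_list :: "nat \<Rightarrow> reading_list \<Rightarrow> bool" where
  "is_reading_list M S \<longleftrightarrow>
     (\<forall>A \<in> set (snd S). A \<subseteq> {1..M * fst S} \<and> card A = fst S)"

definition rl_d :: "reading_list \<Rightarrow> nat" where
  "rl_d S = fst S"

definition rl_n :: "reading_list \<Rightarrow> nat" where
  "rl_n S = length (snd S)"

definition rl_le :: "reading_list \<Rightarrow> reading_list \<Rightarrow> bool" where
  "rl_le S T \<longleftrightarrow>
     (let Ss = snd S; Ts = snd T; n = length Ss; m = length Ts in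
      \<exists>k :: nat \<Rightarrow> nat. \<exists>f :: nat \<Rightarrow> nat \<Rightarrow> nat.
        strict_mono_on {..<n} k \<and> (\<forall>i<n. k i < m) \<and>
        (\<forall>i<n. strict_mono_on (Ss ! i) (f i) \<and> f i ` (Ss ! i) \<subseteq> Ts ! (k i)) \<and>
        (\<forall>i<n. \<forall>j<n. \<forall>x \<in> Ss ! i \<inter> Ss ! j. f i x = f j x))"

definition rl_antichain :: "(nat \<Rightarrow> reading_list) \<Rightarrow> bool" where
  "rl_antichain A \<longleftrightarrow> (\<forall>i j. i \<noteq> j \<longrightarrow> \<not> rl_le (A i) (A j) \<and> \<not> rl_le (A j) (A i))"

end

theory Submission
  imports Defs "HOL-Library.Ramsey" "HOL-Library.Sublist" "HOL-Library.FuncSet"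
begin

text \<open>Fix a reading list S = A 0 with n sets. Every reading list with at least 2Mn sets whose
  sets are very large (of size exponential in Mn) lies above S: by double counting, many
  elements lie in at least n of its first 2Mn sets, and by pigeonhole at least Md + 1 of them
  lie in the same n sets, so one increasing map sends [Md] into all of those sets. Hence if
  both n_i and d_i were unbounded, infinitely many members of the antichain would have at
  least 2Mn sets but bounded set size d_i. These are words over the finite alphabet of
  subsets of a fixed [Me], and Higman's lemma yields one that is a subsequence of a later
  one, which is a relation S_i \<le>_RL S_j realised by identity maps.\<close>

section \<open>Higman's lemma\<close>

definition almost_full_on :: "('a \<Rightarrow> 'a \<Rightarrow> bool) \<Rightarrow> 'a set \<Rightarrow> bool" where
  "almost_full_on P A \<longleftrightarrow> (\<forall>f. (\<forall>i::nat. f i \<in> A) \<longrightarrow> (\<exists>i j. i < j \<and> P (f i) (f j)))"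

lemma almost_full_on_infinite_index:
  fixes f :: "nat \<Rightarrow> 'a"
  assumes "almost_full_on P A" "infinite Z" "\<forall>i\<in>Z. f i \<in> A"
  shows "\<exists>i\<in>Z. \<exists>j\<in>Z. i < j \<and> P (f i) (f j)"
proof -
  have "\<forall>i. f (enumerate Z i) \<in> A"
    using enumerate_in_set[OF assms(2)] assms(3) by blast
  then have "\<exists>i j. i < j \<and> P (f (enumerate Z i)) (f (enumerate Z j))"
    using assms(1) unfolding almost_full_on_def
    by (elim allE[of _ "\<lambda>i. f (enumerate Z i)"]) simp
  then obtain i j where "i < j" "P (f (enumerate Z i)) (f (enumerate Z j))" by blast
  moreover have "enumerate Z i < enumerate Z j"
    using strict_mono_enumerate[OF assms(2)] \<open>i < j\<close> by (simp add: strict_mono_less)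
  ultimately show ?thesis using enumerate_in_set[OF assms(2)] by blast
qed

lemma almost_full_on_empty: "almost_full_on P {}"
  unfolding almost_full_on_def by auto

lemma almost_full_on_subset: "almost_full_on P A \<Longrightarrow> B \<subseteq> A \<Longrightarrow> almost_full_on P B"
  unfolding almost_full_on_def by blast

lemma almost_full_on_Un:
  assumes "almost_full_on P A" "almost_full_on P B"
  shows "almost_full_on P (A \<union> B)"
  unfolding almost_full_on_def
proof (intro allI impI)
  fix f :: "nat \<Rightarrow> 'a" assume f: "\<forall>i. f i \<in> A \<union> B"
  show "\<exists>i j. i < j \<and> P (f i) (f j)"
  proof (cases "finite {i. f i \<in> A}")
    case False
    then show ?thesis using almost_full_on_infinite_index[OF assms(1) False, of f] by auto
  next
    case True
    then have "infinite (- {i. f i \<in> A})" by (simp add: Compl_eq_Diff_UNIV Diff_infinite_finite)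
    moreover have "\<forall>i\<in>- {i. f i \<in> A}. f i \<in> B" using f by auto
    ultimately show ?thesis using almost_full_on_infinite_index[OF assms(2)] by blast
  qed
qed

text \<open>Ramsey's theorem for pairs, colouring i < j by whether P (f i) (f j) holds; the
  colour "no" cannot occur on an infinite homogeneous set.\<close>

lemma almost_full_on_imp_chain:
  fixes f :: "nat \<Rightarrow> 'a"
  assumes "almost_full_on P A" "infinite Z" "\<forall>i\<in>Z. f i \<in> A"
  shows "\<exists>Y\<subseteq>Z. infinite Y \<and> (\<forall>i\<in>Y. \<forall>j\<in>Y. i < j \<longrightarrow> P (f i) (f j))"
proof -
  define colour where "colour X = (if P (f (Min X)) (f (Max X)) then 0 else 1::nat)"
    for X :: "nat set"
  have colour_pair: "colour {i, j} = (if P (f i) (f j) then 0 else 1)" if "i < j" for i j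
    using that unfolding colour_def by (simp add: min_def max_def)
  have "\<forall>i\<in>Z. \<forall>j\<in>Z. i \<noteq> j \<longrightarrow> colour {i, j} < 2" unfolding colour_def by auto
  from Ramsey2[OF assms(2) this] obtain Y t where Y: "Y \<subseteq> Z" "infinite Y"
    "\<forall>i\<in>Y. \<forall>j\<in>Y. i \<noteq> j \<longrightarrow> colour {i, j} = t" by blast
  obtain i j where "i \<in> Y" "j \<in> Y" "i < j" "P (f i) (f j)"
    using almost_full_on_infinite_index[OF assms(1) Y(2)] Y(1) assms(3) by blast
  then have "t = 0" using Y(3) colour_pair[of i j] by (metis less_irrefl)
  then have "\<forall>i\<in>Y. \<forall>j\<in>Y. i < j \<longrightarrow> P (f i) (f j)"
    using Y(3) colour_pair by (metis less_not_refl one_neq_zero)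
  with Y show ?thesis by blast
qed

lemma almost_full_on_image2:
  assumes "almost_full_on P A" "almost_full_on Q B"
    and "\<And>a a' b b'. a \<in> A \<Longrightarrow> a' \<in> A \<Longrightarrow> b \<in> B \<Longrightarrow> b' \<in> B \<Longrightarrow>
           P a a' \<Longrightarrow> Q b b' \<Longrightarrow> R (h a b) (h a' b')"
  shows "almost_full_on R {h a b | a b. a \<in> A \<and> b \<in> B}"
  unfolding almost_full_on_def
proof (intro allI impI)
  fix f :: "nat \<Rightarrow> 'c" assume "\<forall>i. f i \<in> {h a b | a b. a \<in> A \<and> b \<in> B}"
  then have "\<forall>i. \<exists>p. fst p \<in> A \<and> snd p \<in> B \<and> f i = h (fst p) (snd p)" by fastforce
  then obtain p where p: "\<And>i. fst (p i) \<in> A \<and> snd (p i) \<in> B \<and> f i = h (fst (p i)) (snd (p i))"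
    by metis
  obtain Y where Y: "infinite Y" "\<forall>i\<in>Y. \<forall>j\<in>Y. i < j \<longrightarrow> P (fst (p i)) (fst (p j))"
    using almost_full_on_imp_chain[OF assms(1), of UNIV "\<lambda>i. fst (p i)"] p by auto
  obtain i j where "i \<in> Y" "j \<in> Y" "i < j" "Q (snd (p i)) (snd (p j))"
    using almost_full_on_infinite_index[OF assms(2) Y(1), of "\<lambda>i. snd (p i)"] p by auto
  then show "\<exists>i j. i < j \<and> R (f i) (f j)" using Y(2) p assms(3) by metis
qed

text \<open>A word over S avoiding x as a subsequence either misses the first letter a of x,
  or splits at the first a into a word over S - {a} and a word avoiding the rest of x.\<close>

lemma almost_full_on_lists_avoiding:
  assumes IH: "\<And>T. T \<subset> S \<Longrightarrow> almost_full_on subseq (lists T)"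
  shows "set x \<subseteq> S \<Longrightarrow> almost_full_on subseq {w \<in> lists S. \<not> subseq x w}"
proof (induction x)
  case Nil
  then show ?case by (simp add: almost_full_on_empty)
next
  case (Cons a x)
  then have "a \<in> S" and IHx: "almost_full_on subseq {w \<in> lists S. \<not> subseq x w}" by auto
  let ?split = "{v @ a # u | v u. v \<in> lists (S - {a}) \<and> u \<in> {w \<in> lists S. \<not> subseq x w}}"
  have avoiding: "{w \<in> lists S. \<not> subseq (a # x) w} \<subseteq> lists (S - {a}) \<union> ?split"
  proof
    fix w assume w: "w \<in> {w \<in> lists S. \<not> subseq (a # x) w}"
    show "w \<in> lists (S - {a}) \<union> ?split"
    proof (cases "a \<in> set w")
      case True
      then obtain v u where vu: "w = v @ a # u" "a \<notin> set v" by (metis split_list_first)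
      with w have "v \<in> lists (S - {a})" "u \<in> {w \<in> lists S. \<not> subseq x w}" by auto
      with vu show ?thesis by blast
    qed (use w in auto)
  qed
  have "almost_full_on subseq (lists (S - {a}))" using IH \<open>a \<in> S\<close> by blast
  moreover from this IHx have "almost_full_on subseq ?split"
    by (rule almost_full_on_image2) (simp add: list_emb_append_mono)
  ultimately have "almost_full_on subseq (lists (S - {a}) \<union> ?split)"
    by (rule almost_full_on_Un)
  then show ?case using avoiding by (rule almost_full_on_subset)
qed

theorem higman: "finite S \<Longrightarrow> almost_full_on subseq (lists S)"
proof (induction S rule: finite_psubset_induct)
  case (psubset S)
  show ?case unfolding almost_full_on_def
  proof (intro allI impI)
    fix f :: "nat \<Rightarrow> 'a list" assume f: "\<forall>i. f i \<in> lists S"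
    show "\<exists>i j. i < j \<and> subseq (f i) (f j)"
    proof (rule ccontr)
      assume bad: "\<not> ?thesis"
      have "almost_full_on subseq {w \<in> lists S. \<not> subseq (f 0) w}"
        using almost_full_on_lists_avoiding[OF psubset.IH] f by (auto simp: in_lists_conv_set)
      moreover have "\<forall>i\<in>{1..}. f i \<in> {w \<in> lists S. \<not> subseq (f 0) w}" using f bad by auto
      ultimately obtain i j where "i < j" "subseq (f i) (f j)"
        using almost_full_on_infinite_index[of subseq _ "{1..}" f] infinite_Ici by blast
      with bad show False by blast
    qed
  qed
qed

lemma subseq_imp_index_embedding:
  "subseq xs ys \<Longrightarrow> \<exists>k. strict_mono_on {..<length xs} k \<and>
     (\<forall>i<length xs. k i < length ys \<and> xs ! i = ys ! (k i))"
proof (induction rule: list_emb.induct)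
  case (list_emb_Nil ys)
  show ?case by (rule exI[of _ id]) (simp add: strict_mono_on_def)
next
  case (list_emb_Cons xs ys y)
  then obtain k where "strict_mono_on {..<length xs} k"
    "\<forall>i<length xs. k i < length ys \<and> xs ! i = ys ! (k i)" by blast
  then show ?case
    by (intro exI[of _ "\<lambda>i. Suc (k i)"]) (auto simp: strict_mono_on_def)
next
  case (list_emb_Cons2 x y xs ys)
  then obtain k where k: "strict_mono_on {..<length xs} k"
    "\<forall>i<length xs. k i < length ys \<and> xs ! i = ys ! (k i)" by blast
  define k' where "k' i = (case i of 0 \<Rightarrow> 0 | Suc j \<Rightarrow> Suc (k j))" for i
  have "strict_mono_on {..<length (x # xs)} k'"
    unfolding strict_mono_on_def
  proof (intro allI impI)
    fix r s assume rs: "r \<in> {..<length (x # xs)} \<and> s \<in> {..<length (x # xs)} \<and> r < s"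
    then obtain s' where s': "s = Suc s'" by (cases s) auto
    show "k' r < k' s"
      using k(1) rs s' by (cases r) (auto simp: k'_def strict_mono_on_def)
  qed
  moreover have "\<forall>i<length (x # xs). k' i < length (y # ys) \<and> (x # xs) ! i = (y # ys) ! (k' i)"
    using k(2) list_emb_Cons2 by (auto simp: k'_def nth_Cons split: nat.split)
  ultimately show ?case by blast
qed

lemma rl_le_if_subseq:
  assumes "subseq (snd S) (snd T)" shows "rl_le S T"
proof -
  obtain k where "strict_mono_on {..<length (snd S)} k"
    "\<forall>i<length (snd S). k i < length (snd T) \<and> snd S ! i = snd T ! (k i)"
    using subseq_imp_index_embedding[OF assms] by blast
  then show ?thesis
    unfolding rl_le_def Let_def
    by (intro exI[of _ k] exI[of _ "\<lambda>_ x. x"]) (auto simp: strict_mono_on_def)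
qed

lemma rl_le_Nil: "snd S = [] \<Longrightarrow> rl_le S T"
  unfolding rl_le_def Let_def by (auto simp: strict_mono_on_def)

lemma rl_antichain_nonempty:
  assumes "rl_antichain A" shows "snd (A i) \<noteq> []"
  using assms rl_le_Nil[of "A i" "A (Suc i)"] unfolding rl_antichain_def by force

lemma reading_list_zero_width:
  assumes "is_reading_list 0 S" "snd S \<noteq> []" shows "fst S = 0"
proof -
  have "hd (snd S) \<in> set (snd S)" using assms(2) by simp
  then show ?thesis using assms(1) unfolding is_reading_list_def by fastforce
qed

section \<open>Long reading lists with large sets lie above a given one\<close>

lemma sum_card_occurrences:
  assumes "finite C" "\<And>k. k < m \<Longrightarrow> Ts k \<subseteq> C \<and> card (Ts k) = E"
  shows "(\<Sum>y\<in>C. card {k \<in> {..<m}. y \<in> Ts k}) = m * E"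
proof -
  have "(\<Sum>y\<in>C. card {k \<in> {..<m}. y \<in> Ts k}) = (\<Sum>k\<in>{..<m}. E)"
  proof (rule sum_multicount_gen)
    show "\<forall>k\<in>{..<m}. card {y \<in> C. y \<in> Ts k} = E"
      using assms(2) by (simp add: Int_absorb1 Int_def[symmetric] Int_commute)
  qed (use assms(1) in auto)
  then show ?thesis by simp
qed

text \<open>Elements outside H lie in fewer than n of the m sets, elements of H in at most m.\<close>

lemma card_frequent_elements:
  fixes n :: nat
  assumes "finite C" "\<And>k. k < m \<Longrightarrow> Ts k \<subseteq> C \<and> card (Ts k) = E"
  defines "H \<equiv> {y \<in> C. n \<le> card {k \<in> {..<m}. y \<in> Ts k}}"
  shows "m * E \<le> card H * m + card C * n"
proof -
  have occ_le: "card {k. k < m \<and> y \<in> Ts k} \<le> m" for y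
    using card_mono[of "{..<m}" "{k. k < m \<and> y \<in> Ts k}"] by auto
  have "H \<subseteq> C" by (auto simp: H_def)
  have "m * E = (\<Sum>y\<in>C. card {k \<in> {..<m}. y \<in> Ts k})"
    using sum_card_occurrences[OF assms(1,2)] by simp
  also have "\<dots> \<le> (\<Sum>y\<in>C. if y \<in> H then m else n)"
    by (rule sum_mono) (auto simp: H_def occ_le)
  also have "\<dots> = card H * m + card (C - H) * n"
    using assms(1) \<open>H \<subseteq> C\<close> by (simp add: sum.If_cases Int_absorb1 Diff_eq)
  also have "\<dots> \<le> card H * m + card C * n"
    using assms(1) by (simp add: card_mono)
  finally show ?thesis .
qed

lemma pigeonhole_Pow:
  assumes "finite H" "c * 2 ^ m \<le> card H" "\<And>y. y \<in> H \<Longrightarrow> R y \<subseteq> {..<m}"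
  obtains P F where "P \<subseteq> {..<m}" "F \<subseteq> H" "c \<le> card F" "\<And>y. y \<in> F \<Longrightarrow> R y = P"
proof -
  have "R \<in> H \<rightarrow> Pow {..<m}" using assms(3) by auto
  then obtain P where P: "P \<in> Pow {..<m}" "card H \<le> card (R -` {P} \<inter> H) * card (Pow {..<m})"
    using pigeonhole_card[of R H "Pow {..<m}"] assms(1) by auto
  have "c \<le> card (R -` {P} \<inter> H)"
    using le_trans[OF assms(2) P(2)] by (simp add: card_Pow)
  with P(1) show ?thesis by (intro that[of P "R -` {P} \<inter> H"]) auto
qed

lemma exists_strict_mono_on_lessThan_into:
  fixes F :: "'a::linorder set"
  assumes "finite F" "K \<le> card F"
  shows "\<exists>f. strict_mono_on {..<K} f \<and> f ` {..<K} \<subseteq> F"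
proof -
  define fs where "fs = sorted_list_of_set F"
  have fs: "sorted_wrt (<) fs" "length fs = card F" "set fs = F"
    using assms(1) by (auto simp: fs_def strict_sorted_list_of_set)
  have "strict_mono_on {..<K} ((!) fs)"
    using assms(2) fs by (auto simp: strict_mono_on_def intro: sorted_wrt_nth_less)
  moreover have "(!) fs ` {..<K} \<subseteq> F"
    using assms(2) fs by auto
  ultimately show ?thesis by blast
qed

text \<open>A single map f, independent of i, realises the relation, so the compatibility condition
  of \<le>_RL holds trivially.\<close>

lemma rl_le_if_common_subset:
  assumes S: "is_reading_list M S"
    and P: "P \<subseteq> {..<length (snd T)}" "length (snd S) \<le> card P"
    and F: "finite F" "M * fst S \<le> card F" "\<And>k. k \<in> P \<Longrightarrow> F \<subseteq> snd T ! k"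
  shows "rl_le S T"
proof -
  let ?n = "length (snd S)" and ?N = "M * fst S"
  have "finite P" using P(1) finite_subset by blast
  then obtain k where k: "strict_mono_on {..<?n} k" "k ` {..<?n} \<subseteq> P"
    using exists_strict_mono_on_lessThan_into P(2) by blast
  obtain g where g: "strict_mono_on {..<?N} g" "g ` {..<?N} \<subseteq> F"
    using exists_strict_mono_on_lessThan_into F(1,2) by blast
  define f where "f x = g (x - 1)" for x
  have f: "strict_mono_on {1..?N} f" "f ` {1..?N} \<subseteq> F"
  proof -
    show "strict_mono_on {1..?N} f"
      unfolding f_def by (rule strict_mono_onI, rule strict_mono_onD[OF g(1)]) auto
    show "f ` {1..?N} \<subseteq> F" using g(2) by (force simp: f_def)
  qed
  have Si: "snd S ! i \<subseteq> {1..?N}" if "i < ?n" for i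
    using S that unfolding is_reading_list_def by auto
  show ?thesis
    unfolding rl_le_def Let_def
  proof (intro exI[of _ k] exI[of _ "\<lambda>_. f"] conjI allI impI ballI)
    fix i assume i: "i < ?n"
    then show "k i < length (snd T)" using k(2) P(1) by auto
    show "strict_mono_on (snd S ! i) f" using monotone_on_subset[OF f(1) Si[OF i]] .
    show "f ` (snd S ! i) \<subseteq> snd T ! k i" using Si[OF i] f(2) F(3) k(2) i by fastforce
  qed (use k(1) in auto)
qed

lemma rl_le_if_long_and_wide:
  assumes M: "M \<ge> 1" and S: "is_reading_list M S" and T: "is_reading_list M T"
    and long: "2 * M * length (snd S) \<le> length (snd T)"
    and wide: "2 * (M * fst S + 1) * 2 ^ (2 * M * length (snd S)) \<le> fst T"
  shows "rl_le S T"
proof (cases "snd S = []")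
  case True then show ?thesis by (rule rl_le_Nil)
next
  case False
  define n where "n = length (snd S)"
  define m where "m = 2 * M * n"
  define E where "E = fst T"
  define C where "C = {1..M * E}"
  define R where "R y = {k \<in> {..<m}. y \<in> snd T ! k}" for y
  define H where "H = {y \<in> C. n \<le> card (R y)}"
  have "finite H" by (simp add: H_def C_def)
  have TC: "snd T ! k \<subseteq> C \<and> card (snd T ! k) = E" if "k < m" for k
  proof -
    have "snd T ! k \<in> set (snd T)" using that long by (simp add: m_def n_def)
    then show ?thesis using T by (auto simp: is_reading_list_def C_def E_def)
  qed
  have "m * E \<le> card H * m + card C * n"
    using card_frequent_elements[of C m "\<lambda>k. snd T ! k" E n] TC
    unfolding H_def R_def C_def by simp
  then have "(M * n) * E \<le> (M * n) * (2 * card H)"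
    by (simp add: m_def C_def algebra_simps)
  moreover have "M * n > 0" using M False by (simp add: n_def)
  ultimately have "E \<le> 2 * card H" by simp
  then have many: "(M * fst S + 1) * 2 ^ m \<le> card H"
    using wide by (simp add: E_def m_def n_def)
  obtain P F where PF: "P \<subseteq> {..<m}" "F \<subseteq> H" "M * fst S + 1 \<le> card F"
      "\<And>y. y \<in> F \<Longrightarrow> R y = P"
    by (rule pigeonhole_Pow[where R = R, OF \<open>finite H\<close> many]) (auto simp: R_def)
  show ?thesis
  proof (rule rl_le_if_common_subset[OF S, of P T F])
    show "P \<subseteq> {..<length (snd T)}" using PF(1) long by (auto simp: m_def n_def)
    have "F \<noteq> {}" using PF(3) by auto
    then show "length (snd S) \<le> card P" using PF(2,4) by (auto simp: H_def n_def)
    show "finite F" using PF(2) \<open>finite H\<close> finite_subset by blast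
    show "M * fst S \<le> card F" using PF(3) by simp
    show "F \<subseteq> snd T ! k" if "k \<in> P" for k using that PF(4) by (auto simp: R_def)
  qed
qed

lemma bounded_width_imp_rl_le_pair:
  fixes Z :: "nat set"
  assumes "\<And>j. j \<in> Z \<Longrightarrow> is_reading_list M (A j)" "infinite Z" "\<And>j. j \<in> Z \<Longrightarrow> fst (A j) \<le> e"
  shows "\<exists>i\<in>Z. \<exists>j\<in>Z. i < j \<and> rl_le (A i) (A j)"
proof -
  have "almost_full_on subseq (lists (Pow {1..M * e}))" by (rule higman) simp
  moreover have "\<forall>j\<in>Z. snd (A j) \<in> lists (Pow {1..M * e})"
  proof
    fix j assume "j \<in> Z"
    then have "{1..M * fst (A j)} \<subseteq> {1..M * e}" using assms(3) by simp
    moreover have "\<forall>X\<in>set (snd (A j)). X \<subseteq> {1..M * fst (A j)}"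
      using assms(1)[OF \<open>j \<in> Z\<close>] unfolding is_reading_list_def by blast
    ultimately show "snd (A j) \<in> lists (Pow {1..M * e})"
      unfolding in_lists_conv_set by blast
  qed
  ultimately have "\<exists>i\<in>Z. \<exists>j\<in>Z. i < j \<and> subseq (snd (A i)) (snd (A j))"
    by (rule almost_full_on_infinite_index[OF _ assms(2)])
  then show ?thesis using rl_le_if_subseq by blast
qed

lemma infinite_unbounded_level:
  fixes f :: "nat \<Rightarrow> nat"
  assumes "\<not> bdd_above (range f)" shows "infinite {i. c \<le> f i}"
proof
  assume fin: "finite {i. c \<le> f i}"
  have "f i \<le> c + Max (f ` {i. c \<le> f i})" for i
  proof (cases "c \<le> f i")
    case True
    then have "f i \<le> Max (f ` {i. c \<le> f i})" using fin by (simp add: Max_ge)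
    then show ?thesis by simp
  qed simp
  then have "bdd_above (range f)" by (rule bdd_aboveI2)
  with assms show False by simp
qed

theorem mainTheorem4:
  fixes M :: nat and A :: "nat \<Rightarrow> reading_list"
  assumes "\<forall>i. is_reading_list M (A i)"
    and "rl_antichain A"
  shows "bdd_above (range (\<lambda>i. rl_n (A i))) \<or> bdd_above (range (\<lambda>i. rl_d (A i)))"
proof (rule ccontr)
  assume unbdd: "\<not> ?thesis"
  have incomparable: "\<not> rl_le (A i) (A j)" if "i \<noteq> j" for i j
    using assms(2) that unfolding rl_antichain_def by blast
  have "M \<ge> 1"
  proof (rule ccontr)
    assume "\<not> M \<ge> 1"
    then have "M = 0" by simp
    then have "rl_d (A i) = 0" for i
      using reading_list_zero_width assms(1) rl_antichain_nonempty[OF assms(2)]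
      by (simp add: rl_d_def)
    with unbdd show False by simp
  qed
  define n where "n = length (snd (A 0))"
  define Z where "Z = {j. 2 * M * n \<le> rl_n (A j)} - {0}"
  have "infinite Z" using infinite_unbounded_level unbdd by (simp add: Z_def)
  moreover have "fst (A j) \<le> 2 * (M * fst (A 0) + 1) * 2 ^ (2 * M * n)" if "j \<in> Z" for j
  proof (rule ccontr)
    assume "\<not> ?thesis"
    then have "rl_le (A 0) (A j)"
      using that assms(1)
      by (intro rl_le_if_long_and_wide[OF \<open>M \<ge> 1\<close>]) (auto simp: Z_def n_def rl_n_def)
    with incomparable[of 0 j] that show False by (simp add: Z_def)
  qed
  ultimately obtain i j where "i < j" "rl_le (A i) (A j)"
    using bounded_width_imp_rl_le_pair assms(1) by metis
  with incomparable show False by simp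
qed

end
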